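(* Let $a,b,c,a',b',c',d,e,f,g$ be real numbers and let $P=P(a,b,c,a',b',c',d,e,f,g)$ be the $6\times6$ Hermitian matrix defined in the context. Then $P$ is positive semidefinite of rank $2$ if and only if $$a^2+b^2+c^2=1,\quad a'^2+b'^2+c'^2=1,\quad d=aa'+bb'+cc',\quad e=b'c-bc',\quad f=ac'-a'c,\quad g=a'b-ab'.$$ Moreover, in that case $P=QQ^{\mathrm H}$, where $Q$ is the $6\times 2$ matrix $$Q=\begin{pmatrix}1&0\\0&1\\ ci & b+ai\\ -b+ai & -ci\\ c'i & b'+a'i\\ -b'+a'i & -c'i\end{pmatrix}.$$
   Context: $i=\sqrt{-1}$, $\cdot^{\mathrm H}$ is the conjugate transpose. For real $a,b,c,a',b',c',d,e,f,g$, define the $6\times 6$ complex matrix $$P(a,b,c,a',b',c',d,e,f,g)=\begin{pmatrix} 1&0&-ci&-b-ai&-c'i&-b'-a'i\\ 0&1&b-ai&ci&b'-a'i&c'i\\ ci&b+ai&1&0&d-gi&-f-ei\\ -b+ai&-ci&0&1&f-ei&d+gi\\ c'i&b'+a'i&d+gi&f+ei&1&0\\ -b'+a'i&-c'i&-f+ei&d-gi&0&1 \end{pmatrix},$$ which is Hermitian. *)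

theory Defs
  imports "Jordan_Normal_Form.Schur_Decomposition" "Jordan_Normal_Form.DL_Rank"
begin

definition psd_mat :: "complex mat \<Rightarrow> bool" where
  "psd_mat A \<longleftrightarrow> A \<in> carrier_mat (dim_row A) (dim_row A) \<and> mat_adjoint A = A \<and>
     (\<forall>x \<in> carrier_vec (dim_row A). conjugate x \<bullet> (A *\<^sub>v x) \<ge> 0)"

definition Pmat :: "real \<Rightarrow> real \<Rightarrow> real \<Rightarrow> real \<Rightarrow> real \<Rightarrow> real \<Rightarrow> real \<Rightarrow> real \<Rightarrow> real \<Rightarrow> real \<Rightarrow> complex mat" where
  "Pmat a b c a' b' c' d e f g = mat_of_rows_list 6 [
    [1, 0, -c*\<i>, -b-a*\<i>, -c'*\<i>, -b'-a'*\<i>],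
    [0, 1, b-a*\<i>, c*\<i>, b'-a'*\<i>, c'*\<i>],
    [c*\<i>, b+a*\<i>, 1, 0, d-g*\<i>, -f-e*\<i>],
    [-b+a*\<i>, -c*\<i>, 0, 1, f-e*\<i>, d+g*\<i>],
    [c'*\<i>, b'+a'*\<i>, d+g*\<i>, f+e*\<i>, 1, 0],
    [-b'+a'*\<i>, -c'*\<i>, -f+e*\<i>, d-g*\<i>, 0, 1]]"

definition Qmat :: "real \<Rightarrow> real \<Rightarrow> real \<Rightarrow> real \<Rightarrow> real \<Rightarrow> real \<Rightarrow> complex mat" where
  "Qmat a b c a' b' c' = mat_of_rows_list 2 [
    [1, 0],
    [0, 1],
    [c*\<i>, b+a*\<i>],
    [-b+a*\<i>, -c*\<i>],
    [c'*\<i>, b'+a'*\<i>],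
    [-b'+a'*\<i>, -c'*\<i>]]"

end

theory Submission
  imports Defs "Jordan_Normal_Form.DL_Rank_Submatrix"
begin

text \<open>Write \<open>u = (a, b, c)\<close> and \<open>v = (a', b', c')\<close>. The conditions say that \<open>u\<close> and \<open>v\<close> are unit
  vectors, \<open>d = u \<bullet> v\<close> and \<open>(e, f, g) = v \<times> u\<close>, and under them \<open>P = Q Q\<^sup>H\<close> entrywise. A Gram matrix
  \<open>Q Q\<^sup>H\<close> is positive semidefinite of rank at most the number of columns of \<open>Q\<close>, and the identity
  block in the upper left corner of \<open>P\<close> gives rank at least 2.

  Conversely, if \<open>P\<close> has rank 2, then every \<open>3 \<times> 3\<close> minor of \<open>P\<close> extending the leading identity
  block vanishes; such a minor is the Schur complement entry \<open>P\<^sub>j\<^sub>k - P\<^sub>j\<^sub>0 P\<^sub>0\<^sub>k - P\<^sub>j\<^sub>1 P\<^sub>1\<^sub>k\<close>,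
  and the entries \<open>(2,2)\<close>, \<open>(4,4)\<close>, \<open>(2,4)\<close>, \<open>(2,5)\<close> yield the six equations.\<close>

lemma dim_mat_adjoint [simp]:
  "dim_row (mat_adjoint A) = dim_col A" "dim_col (mat_adjoint A) = dim_row A"
  by (simp_all add: mat_adjoint_def)

lemma index_mat_adjoint [simp]:
  "i < dim_col A \<Longrightarrow> j < dim_row A \<Longrightarrow> mat_adjoint A $$ (i, j) = conjugate (A $$ (j, i))"
  by (simp add: mat_adjoint_def mat_of_rows_def)

lemma mat_adjoint_carrier [simp]: "A \<in> carrier_mat n m \<Longrightarrow> mat_adjoint A \<in> carrier_mat m n"
  by auto

lemma mat_adjoint_mult_adjoint:
  fixes A :: "'a :: conjugatable_field mat"
  shows "mat_adjoint (A * mat_adjoint A) = A * mat_adjoint A"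
  by (rule eq_matI) (auto simp: scalar_prod_def sum_conjugate conjugate_dist_mul mult.commute intro!: sum.cong)

lemma quadratic_form_mult_adjoint:
  fixes A :: "'a :: conjugatable_field mat"
  assumes A: "A \<in> carrier_mat n m" and x: "x \<in> carrier_vec n"
  shows "conjugate x \<bullet> ((A * mat_adjoint A) *\<^sub>v x) = (mat_adjoint A *\<^sub>v x) \<bullet>c (mat_adjoint A *\<^sub>v x)"
proof -
  let ?y = "mat_adjoint A *\<^sub>v x"
  have "vec m (\<lambda>j. conjugate x \<bullet> col A j) = conjugate ?y"
    using A x by (intro eq_vecI) (auto simp: scalar_prod_def sum_conjugate conjugate_dist_mul mult.commute intro!: sum.cong)
  moreover have "(A * mat_adjoint A) *\<^sub>v x = A *\<^sub>v ?y"
    using A x by (simp add: assoc_mult_mat_vec[of _ n m _ n])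
  ultimately have "conjugate x \<bullet> ((A * mat_adjoint A) *\<^sub>v x) = conjugate ?y \<bullet> ?y"
    using assoc_scalar_prod[of "conjugate x" n A m ?y] A x by (simp add: mult_mat_vec_def)
  also have "\<dots> = ?y \<bullet>c ?y"
    using conjugate_vec_sprod_comm[of ?y m ?y] mult_mat_vec_carrier[OF mat_adjoint_carrier[OF A] x] by simp
  finally show ?thesis .
qed

lemma psd_mat_mult_adjoint:
  assumes A: "A \<in> carrier_mat n m"
  shows "psd_mat (A * mat_adjoint A)"
  unfolding psd_mat_def
  using A quadratic_form_mult_adjoint[OF A] mat_adjoint_mult_adjoint[of A] by auto

lemma (in vec_space) rank_mult_le:
  assumes A: "A \<in> carrier_mat n m" and B: "B \<in> carrier_mat m nc"
  shows "rank (A * B) \<le> rank A"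
proof -
  let ?W = "span (set (cols A))"
  have cols_A: "set (cols A) \<subseteq> carrier_vec n" and cols_AB: "set (cols (A * B)) \<subseteq> carrier_vec n"
    using A cols_dim[of A] cols_dim[of "A * B"] by auto
  have "col (A * B) j \<in> ?W" if "j < nc" for j
  proof -
    have "col (A * B) j = mat_of_cols n (cols A) *\<^sub>v col B j"
      using A B that mat_of_cols_cols[of A] by (simp add: mult_mat_vec_def)
    then show ?thesis
      using A B that cols_A mat_of_cols_mult_as_finsum[where lst = "cols A" and v = "col B j"]
      by (intro in_spanI) auto
  qed
  then have "set (cols (A * B)) \<subseteq> ?W"
    using A B by (auto simp: cols_def)
  then have "VectorSpace.subspace class_ring (span (set (cols (A * B)))) (vs ?W)"
    using cols_A cols_AB by (intro nested_subspaces span_is_subspace) (auto simp: span_is_subset span_is_submodule)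
  then show ?thesis
    unfolding rank_def
    using vectorspace.subspace_dim[OF subspace_is_vs[OF span_is_subspace[OF cols_A]]]
      fin_dim_span_cols[OF A] fin_dim_span_cols[of "A * B" nc] A B by auto
qed

lemma rank_mult_adjoint_le:
  fixes A :: "'a :: conjugatable_field mat"
  assumes A: "A \<in> carrier_mat n m"
  shows "vec_space.rank n (A * mat_adjoint A) \<le> m"
  using vec_space.rank_mult_le[OF A mat_adjoint_carrier[OF A]] vec_space.rank_le_nc[OF A] by simp

lemma det_3_identity_block:
  fixes M :: "'a :: comm_ring_1 mat"
  assumes M: "M \<in> carrier_mat 3 3"
    and id: "M $$ (0,0) = 1" "M $$ (0,1) = 0" "M $$ (1,0) = 0" "M $$ (1,1) = 1"
  shows "det M = M $$ (2,2) - M $$ (2,0) * M $$ (0,2) - M $$ (2,1) * M $$ (1,2)"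
proof -
  let ?s = "M $$ (2,2) - M $$ (2,0) * M $$ (0,2) - M $$ (2,1) * M $$ (1,2)"
  \<comment> \<open>One step of Gaussian elimination: \<open>L\<close> clears row 2 against the identity block, leaving the
    Schur complement \<open>?s\<close> in the corner of the upper triangular \<open>U\<close>.\<close>
  define L where "L = mat 3 3 (\<lambda>(i,j). if i = j then 1 else if i = 2 \<and> j < 2 then M $$ (2,j) else 0)"
  define U where "U = mat 3 3 (\<lambda>(i,j). if i < 2 then M $$ (i,j) else if j = 2 then ?s else 0)"
  have three: "i < 3 \<Longrightarrow> i = 0 \<or> i = 1 \<or> i = 2" for i :: nat by auto
  have sum_3: "(\<Sum>i = 0..<3. f i) = f 0 + f 1 + f 2" for f :: "nat \<Rightarrow> 'a"
    by (simp add: eval_nat_numeral)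
  have LU: "M = L * U"
    using M id by (intro eq_matI) (auto simp: L_def U_def scalar_prod_def sum_3 algebra_simps dest!: three)
  have "det M = det L * det U"
    unfolding LU by (rule det_mult[of _ 3]) (simp_all add: L_def U_def)
  moreover have "det L = 1"
    by (subst det_lower_triangular[of 3]) (auto simp: L_def diag_mat_def numeral_3_eq_3 upt_rec)
  moreover have "det U = ?s"
    using id by (subst det_upper_triangular[of _ 3])
      (auto simp: U_def upper_triangular_def diag_mat_def numeral_3_eq_3 upt_rec less_2_cases_iff dest!: three)
  ultimately show ?thesis by simp
qed

lemma pick_insert_0_1:
  "pick (insert 0 (insert 1 S)) 0 = 0" "pick (insert 0 (insert 1 S)) 1 = 1"
  by (auto intro!: Least_equality)

lemma pick_0_1_2:
  assumes "2 \<le> j"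
  shows "pick {0, 1, j} 2 = j"
proof -
  have "pick {0, 1, j} (Suc 1) = j"
    using assms unfolding pick.simps pick_insert_0_1 by (auto intro!: Least_equality)
  then show ?thesis by (simp add: numeral_2_eq_2)
qed

lemma (in vec_space) rank_ge_2_of_identity_block:
  assumes A: "A \<in> carrier_mat n n" and n: "2 \<le> n"
    and id: "A $$ (0,0) = 1" "A $$ (0,1) = 0" "A $$ (1,0) = 0" "A $$ (1,1) = 1"
  shows "2 \<le> rank A"
proof -
  have idx: "{i. i < n \<and> i \<in> {0, 1}} = {0, 1::nat}" using n by auto
  then have card: "card {i. i < dim_row A \<and> i \<in> {0, 1}} = 2" "card {i. i < dim_col A \<and> i \<in> {0, 1}} = 2"
    using A by simp_all
  have "submatrix A {0,1} {0,1} = 1\<^sub>m 2"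
  proof (rule eq_matI)
    fix i j assume "i < dim_row (1\<^sub>m 2)" "j < dim_col (1\<^sub>m 2)"
    then have "i < 2" "j < 2" by simp_all
    then have "submatrix A {0,1} {0,1} $$ (i,j) = A $$ (pick {0,1} i, pick {0,1} j)"
      by (intro submatrix_index) (simp_all only: card)
    with \<open>i < 2\<close> \<open>j < 2\<close> show "submatrix A {0,1} {0,1} $$ (i,j) = 1\<^sub>m 2 $$ (i,j)"
      using id pick_insert_0_1[of "{}", unfolded One_nat_def]
      by (auto simp: less_2_cases_iff simp del: pick.simps)
  qed (simp_all only: dim_submatrix card index_one_mat)
  then have "card {j. j < n \<and> j \<in> {0,1}} \<le> rank A"
    using rank_gt_minor[OF A, of "{0,1}" "{0,1}"] by simp
  then show ?thesis
    unfolding idx by simp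
qed

lemma (in vec_space) schur_complement_zero_of_rank_le_2:
  assumes A: "A \<in> carrier_mat n n" and j: "2 \<le> j" "j < n" and k: "2 \<le> k" "k < n"
    and id: "A $$ (0,0) = 1" "A $$ (0,1) = 0" "A $$ (1,0) = 0" "A $$ (1,1) = 1"
    and rank: "rank A \<le> 2"
  shows "A $$ (j,k) = A $$ (j,0) * A $$ (0,k) + A $$ (j,1) * A $$ (1,k)"
proof (rule ccontr)
  assume ne: "A $$ (j,k) \<noteq> A $$ (j,0) * A $$ (0,k) + A $$ (j,1) * A $$ (1,k)"
  have idx_j: "{i. i < n \<and> i \<in> {0,1,j}} = {0,1,j}" and idx_k: "{i. i < n \<and> i \<in> {0,1,k}} = {0,1,k}"
    using j k by auto
  have card: "card {0,1,j} = 3" "card {0,1,k} = 3"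
    using j k by auto
  define M where "M = submatrix A {0,1,j} {0,1,k}"
  have dim_M: "dim_row M = 3" "dim_col M = 3"
    unfolding M_def dim_submatrix carrier_matD[OF A] idx_j idx_k card by simp_all
  have M_index: "M $$ (r,s) = A $$ (pick {0,1,j} r, pick {0,1,k} s)" if "r < 3" "s < 3" for r s
    using that dim_M unfolding M_def by (intro submatrix_index) (simp_all only: dim_submatrix)
  have M: "M \<in> carrier_mat 3 3"
    using dim_M by (intro carrier_matI)
  have "det M = A $$ (j,k) - A $$ (j,0) * A $$ (0,k) - A $$ (j,1) * A $$ (1,k)"
    by (subst det_3_identity_block[OF M])
      (simp_all add: M_index pick_insert_0_1[unfolded One_nat_def] pick_0_1_2[OF j(1), unfolded One_nat_def]
        pick_0_1_2[OF k(1), unfolded One_nat_def] id[unfolded One_nat_def]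
        del: pick.simps)
  with ne have "det (submatrix A {0,1,j} {0,1,k}) \<noteq> 0"
    unfolding M_def by (simp add: diff_diff_eq)
  then have "card {i. i < n \<and> i \<in> {0,1,k}} \<le> rank A"
    by (rule rank_gt_minor[OF A])
  then have "3 \<le> rank A"
    unfolding idx_k card .
  with rank show False by simp
qed

lemma Pmat_carrier: "Pmat a b c a' b' c' d e f g \<in> carrier_mat 6 6"
  by (auto simp: Pmat_def mat_of_rows_list_def)

lemma Pmat_index:
  "i < 6 \<Longrightarrow> j < 6 \<Longrightarrow> Pmat a b c a' b' c' d e f g $$ (i,j) = [
    [1, 0, -c*\<i>, -b-a*\<i>, -c'*\<i>, -b'-a'*\<i>],
    [0, 1, b-a*\<i>, c*\<i>, b'-a'*\<i>, c'*\<i>],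
    [c*\<i>, b+a*\<i>, 1, 0, d-g*\<i>, -f-e*\<i>],
    [-b+a*\<i>, -c*\<i>, 0, 1, f-e*\<i>, d+g*\<i>],
    [c'*\<i>, b'+a'*\<i>, d+g*\<i>, f+e*\<i>, 1, 0],
    [-b'+a'*\<i>, -c'*\<i>, -f+e*\<i>, d-g*\<i>, 0, 1]] ! i ! j"
  by (simp add: Pmat_def mat_of_rows_list_def)

lemma Qmat_carrier: "Qmat a b c a' b' c' \<in> carrier_mat 6 2"
  by (auto simp: Qmat_def mat_of_rows_list_def)

lemma Qmat_index:
  "i < 6 \<Longrightarrow> j < 2 \<Longrightarrow> Qmat a b c a' b' c' $$ (i,j) = [
    [1, 0],
    [0, 1],
    [c*\<i>, b+a*\<i>],
    [-b+a*\<i>, -c*\<i>],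
    [c'*\<i>, b'+a'*\<i>],
    [-b'+a'*\<i>, -c'*\<i>]] ! i ! j"
  by (simp add: Qmat_def mat_of_rows_list_def)

lemma Pmat_eq_Qmat_mult_adjoint:
  assumes "a^2 + b^2 + c^2 = 1" "a'^2 + b'^2 + c'^2 = 1" "d = a*a' + b*b' + c*c'"
    "e = b'*c - b*c'" "f = a*c' - a'*c" "g = a'*b - a*b'"
  shows "Pmat a b c a' b' c' d e f g = Qmat a b c a' b' c' * mat_adjoint (Qmat a b c a' b' c')"
    (is "?P = ?Q * mat_adjoint ?Q")
proof (rule eq_matI)
  have Q: "?Q \<in> carrier_mat 6 2" by (rule Qmat_carrier)
  have six: "i < 6 \<Longrightarrow> i = 0 \<or> i = 1 \<or> i = 2 \<or> i = 3 \<or> i = 4 \<or> i = 5" for i :: nat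
    by auto
  fix i j assume "i < dim_row (?Q * mat_adjoint ?Q)" "j < dim_col (?Q * mat_adjoint ?Q)"
  then have ij: "i < 6" "j < 6"
    using Q by simp_all
  then have "(?Q * mat_adjoint ?Q) $$ (i,j) = ?Q $$ (i,0) * cnj (?Q $$ (j,0)) + ?Q $$ (i,1) * cnj (?Q $$ (j,1))"
    using Q by (simp add: scalar_prod_def eval_nat_numeral)
  with ij show "?P $$ (i,j) = (?Q * mat_adjoint ?Q) $$ (i,j)"
    using assms
    by (auto simp: Pmat_index Qmat_index complex_eq_iff power2_eq_square algebra_simps dest!: six)
qed (use Pmat_carrier[of a b c a' b' c' d e f g] Qmat_carrier[of a b c a' b' c'] in simp_all)

lemma Pmat_params_of_rank_le_2:
  assumes "vec_space.rank 6 (Pmat a b c a' b' c' d e f g) \<le> 2"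
  shows "a^2 + b^2 + c^2 = 1 \<and> a'^2 + b'^2 + c'^2 = 1 \<and> d = a*a' + b*b' + c*c' \<and>
    e = b'*c - b*c' \<and> f = a*c' - a'*c \<and> g = a'*b - a*b'"
proof -
  let ?P = "Pmat a b c a' b' c' d e f g"
  have schur: "?P $$ (j,k) = ?P $$ (j,0) * ?P $$ (0,k) + ?P $$ (j,1) * ?P $$ (1,k)"
    if "2 \<le> j" "j < 6" "2 \<le> k" "k < 6" for j k
    using that assms by (intro vec_space.schur_complement_zero_of_rank_le_2[OF Pmat_carrier]) (simp_all add: Pmat_index)
  show ?thesis
    using schur[of 2 2] schur[of 4 4] schur[of 2 4] schur[of 2 5]
    by (simp add: Pmat_index complex_eq_iff power2_eq_square algebra_simps)
qed

theorem mainTheorem3: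
  fixes a b c a' b' c' d e f g :: real
  shows "((psd_mat (Pmat a b c a' b' c' d e f g) \<and> vec_space.rank 6 (Pmat a b c a' b' c' d e f g) = 2)
     \<longleftrightarrow> (a^2 + b^2 + c^2 = 1 \<and> a'^2 + b'^2 + c'^2 = 1 \<and> d = a*a' + b*b' + c*c' \<and>
          e = b'*c - b*c' \<and> f = a*c' - a'*c \<and> g = a'*b - a*b'))
   \<and> ((psd_mat (Pmat a b c a' b' c' d e f g) \<and> vec_space.rank 6 (Pmat a b c a' b' c' d e f g) = 2)
     \<longrightarrow> Pmat a b c a' b' c' d e f g = Qmat a b c a' b' c' * mat_adjoint (Qmat a b c a' b' c'))"
proof -
  let ?P = "Pmat a b c a' b' c' d e f g" and ?Q = "Qmat a b c a' b' c'"
  let ?params = "a^2 + b^2 + c^2 = 1 \<and> a'^2 + b'^2 + c'^2 = 1 \<and> d = a*a' + b*b' + c*c' \<and>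
    e = b'*c - b*c' \<and> f = a*c' - a'*c \<and> g = a'*b - a*b'"
  have factor: "?P = ?Q * mat_adjoint ?Q" if ?params
    using that by (intro Pmat_eq_Qmat_mult_adjoint) simp_all
  have "psd_mat ?P \<and> vec_space.rank 6 ?P = 2" if ?params
  proof -
    have "vec_space.rank 6 ?P \<le> 2"
      using rank_mult_adjoint_le[OF Qmat_carrier] factor[OF that] by simp
    moreover have "2 \<le> vec_space.rank 6 ?P"
      by (rule vec_space.rank_ge_2_of_identity_block[OF Pmat_carrier]) (simp_all add: Pmat_index)
    ultimately show ?thesis
      using psd_mat_mult_adjoint[OF Qmat_carrier] factor[OF that] by simp
  qed
  moreover have ?params if "vec_space.rank 6 ?P = 2"
    using that by (intro Pmat_params_of_rank_le_2) simp
  ultimately show ?thesis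
    using factor by blast
qed

end
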